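(* There is an absolute constant $C>0$ such that for every integer $q\geq 4$ and every positive integer $n$, \[ F_{q,q-1}(n)\leq G_{q,q-1}(n)\leq n^{1+C/\sqrt{\log q}}. \] In particular, for every fixed $\varepsilon>0$ there is $q_0(\varepsilon)$ such that for all integers $q\geq q_0(\varepsilon)$ and all positive integers $n$, $F_{q,q-1}(n)\leq G_{q,q-1}(n)\leq n^{1+\varepsilon}$.
   Context: Logarithms are to base $2$, and $[n]=\{1,\dots,n\}$. For integers $q\geq r\geq 1$ and $x,y\in\mathbb{R}^q$, write $x<_r y$ if there are at least $r$ coordinates $i\in[q]$ with $x_i<y_i$. $F_{q,r}(n)$ is the maximum $N$ such that there exist vectors $x_1,\dots,x_N\in[n]^q$ with $x_a<_r x_b$ for all $1\leq a<b\leq N$ (an $r$-increasing sequence). $G_{q,r}(n)$ is the maximum size of a set $S\subseteq[n]^q$ such that for all distinct $x,y\in S$, either $x<_r y$ or $y<_r x$ (an $r$-comparable set). *)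

theory Defs
  imports Complex_Main
begin

text \<open>Vectors in [n]^q are represented as lists of length q with entries in {1..n};
  coordinate i (1-based in the paper) is xs ! (i-1).\<close>

definition cube :: "nat \<Rightarrow> nat \<Rightarrow> nat list set" where
  "cube q n = {xs. length xs = q \<and> set xs \<subseteq> {1..n}}"

definition r_less :: "nat \<Rightarrow> nat list \<Rightarrow> nat list \<Rightarrow> bool" where
  "r_less r x y \<longleftrightarrow> r \<le> card {i. i < length x \<and> i < length y \<and> x ! i < y ! i}"

definition F :: "nat \<Rightarrow> nat \<Rightarrow> nat \<Rightarrow> nat" where
  "F q r n = Max {N. \<exists>x :: nat \<Rightarrow> nat list.
      (\<forall>a\<in>{1..N}. x a \<in> cube q n) \<and>
      (\<forall>a b. 1 \<le> a \<and> a < b \<and> b \<le> N \<longrightarrow> r_less r (x a) (x b))}"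

definition G :: "nat \<Rightarrow> nat \<Rightarrow> nat \<Rightarrow> nat" where
  "G q r n = Max {card S | S. S \<subseteq> cube q n \<and>
      (\<forall>x\<in>S. \<forall>y\<in>S. x \<noteq> y \<longrightarrow> r_less r x y \<or> r_less r y x)}"

end

(*
  For q >= 4 the relation <_{q-1} has no 2-cycles and no 3-cycles, so it linearly orders a
  (q-1)-comparable set, which is therefore a (q-1)-increasing sequence x_0, ..., x_{N-1}.
  For a block I of indices and a coordinate i let Phi_i(I) = sum_v c_v ln c_v (xlnx_counts i I),
  where c_v counts the a in I with (x_a)_i = v; by convexity Phi_i of the whole sequence is at
  least N ln (N / n).
  Merging adjacent blocks I < J increases Phi_i by
  sum_v ((c_v + d_v) ln (c_v + d_v) - c_v ln c_v - d_v ln d_v), which is small unless many pairs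
  s in I, t in J have (x_t)_i <= (x_s)_i; as s < t leaves room for only one such coordinate,
  these inversions number at most |I| |J| over all i. Splitting each coordinate at a suitable
  threshold value, a merge costs (|I| + |J|) sqrt q (1 + ln q) summed over the q coordinates, so
  a dyadic merge tree gives q N ln (N / n) <= sqrt q (1 + ln q) N log2 (2 N), that is
  ln N <= (1 + O(ln q / sqrt q)) ln n.
*)
theory Submission
  imports Defs "HOL-Library.Log_Nat" "HOL-Real_Asymp.Real_Asymp"
begin

lemma xlnx_add_le:
  fixes a b e :: real
  assumes a: "0 \<le> a" and b: "0 \<le> b" and e: "0 < e" "e \<le> 1"
  shows "(a + b) * ln (a + b) - a * ln a - b * ln b \<le> e * (a + b) + ln (1 / e) * b"
proof (cases "a = 0 \<or> b = 0")
  case True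
  then show ?thesis using a b e by auto
next
  case False
  with a b have a: "0 < a" and b: "0 < b" by auto
  have "ln ((a + b) / a) \<le> (a + b) / a - 1"
    using a b by (intro ln_le_minus_one) simp
  then have part_a: "a * ln ((a + b) / a) \<le> b"
    using a by (simp add: field_simps)
  have "ln (e * ((a + b) / b)) \<le> e * ((a + b) / b) - 1"
    using a b e by (intro ln_le_minus_one) simp
  moreover have "ln (e * ((a + b) / b)) = ln e + ln ((a + b) / b)"
    using a b e by (intro ln_mult_pos) simp_all
  ultimately have "ln e + ln ((a + b) / b) \<le> e * (a + b) / b - 1"
    by simp
  then have part_b: "b * ln ((a + b) / b) \<le> e * (a + b) - b - b * ln e"
    using b by (simp add: field_simps)
  have "ln (1 / e) = - ln e"
    using e by (simp add: ln_div)
  moreover have "(a + b) * ln (a + b) - a * ln a - b * ln b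
      = a * ln ((a + b) / a) + b * ln ((a + b) / b)"
    using a b by (simp add: ln_div algebra_simps)
  ultimately show ?thesis using part_a part_b by (simp add: algebra_simps)
qed

lemma xlnx_ge_tangent:
  fixes x t :: real
  assumes x: "0 \<le> x" and t: "0 < t"
  shows "x * ln t + x - t \<le> x * ln x"
proof (cases "x = 0")
  case True
  then show ?thesis using t by simp
next
  case False
  with x have x: "0 < x" by simp
  have "ln (t / x) \<le> t / x - 1"
    using x t by (intro ln_le_minus_one) simp
  then show ?thesis
    using x t by (simp add: ln_div field_simps)
qed

lemma sum_xlnx_ge:
  fixes c :: "'a \<Rightarrow> real"
  assumes V: "finite V" and c: "\<And>v. v \<in> V \<Longrightarrow> 0 \<le> c v" and pos: "0 < sum c V"
  shows "sum c V * ln (sum c V / card V) \<le> (\<Sum>v\<in>V. c v * ln (c v))"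
proof -
  define t where "t = sum c V / card V"
  have "V \<noteq> {}" using pos by auto
  with V have card: "0 < card V" by (simp add: card_gt_0_iff)
  then have t: "0 < t" using pos by (simp add: t_def)
  have "(\<Sum>v\<in>V. c v * ln t + c v - t) = sum c V * ln t"
    using card by (simp add: sum.distrib sum_subtractf sum_distrib_right t_def)
  moreover have "(\<Sum>v\<in>V. c v * ln t + c v - t) \<le> (\<Sum>v\<in>V. c v * ln (c v))"
    using c t by (intro sum_mono xlnx_ge_tangent) auto
  ultimately show ?thesis by (simp add: t_def)
qed

lemma exists_threshold:
  fixes f g :: "'a \<Rightarrow> nat" and \<mu> :: real
  assumes A: "finite A" and B: "finite B" and \<mu>: "0 \<le> \<mu>"
  shows "\<exists>\<theta>. card {a\<in>A. \<theta> \<le> f a} \<le> \<mu> \<and>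
    \<mu> * card {b\<in>B. g b < \<theta>} \<le> card {(a, b). a \<in> A \<and> b \<in> B \<and> g b \<le> f a}"
proof -
  let ?P = "\<lambda>\<theta>. card {a\<in>A. \<theta> \<le> f a} \<le> \<mu>"
  have empty: "{a\<in>A. Suc (Max (f ` A)) \<le> f a} = {}"
    using A by (auto dest: Max_ge[of "f ` A", OF finite_imageI] simp: not_less_eq_eq)
  have "?P (Suc (Max (f ` A)))" using \<mu> unfolding empty by simp
  then have P: "?P (Least ?P)" by (rule LeastI)
  show ?thesis
  proof (cases "Least ?P")
    case 0
    then show ?thesis using P by (intro exI[of _ 0]) simp
  next
    case (Suc \<theta>)
    let ?A = "{a\<in>A. \<theta> \<le> f a}" and ?B = "{b\<in>B. g b < Suc \<theta>}"
    have "\<not> ?P \<theta>" using Suc by (metis not_less_Least lessI)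
    then have "\<mu> * card ?B \<le> real (card ?A) * card ?B" by (intro mult_right_mono) auto
    also have "\<dots> = card (?A \<times> ?B)" by (simp add: card_cartesian_product)
    also have "\<dots> \<le> card {(a, b). a \<in> A \<and> b \<in> B \<and> g b \<le> f a}"
      using A B Suc by (intro card_mono of_nat_mono) (auto intro: finite_subset[of _ "A \<times> B"])
    finally show ?thesis using P Suc by (intro exI[of _ "Suc \<theta>"]) auto
  qed
qed

definition r_comparable :: "nat \<Rightarrow> nat list set \<Rightarrow> bool" where
  "r_comparable r S \<longleftrightarrow> (\<forall>x\<in>S. \<forall>y\<in>S. x \<noteq> y \<longrightarrow> r_less r x y \<or> r_less r y x)"

lemma r_less_irrefl: "0 < r \<Longrightarrow> \<not> r_less r x x"
  by (simp add: r_less_def)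

lemma r_less_iff:
  "length x = q \<Longrightarrow> length y = q \<Longrightarrow> r_less r x y \<longleftrightarrow> r \<le> card {i. i < q \<and> x ! i < y ! i}"
  by (simp add: r_less_def)

lemma r_less_asym:
  assumes "q < 2 * r" "length x = q" "length y = q" "r_less r x y"
  shows "\<not> r_less r y x"
proof
  assume "r_less r y x"
  let ?A = "{i. i < q \<and> x ! i < y ! i}" and ?B = "{i. i < q \<and> y ! i < x ! i}"
  have "2 * r \<le> card ?A + card ?B"
    using assms \<open>r_less r y x\<close> by (simp add: r_less_iff)
  also have "\<dots> = card (?A \<union> ?B)"
    by (rule card_Un_disjoint[symmetric]) auto
  also have "\<dots> \<le> q"
    by (intro subset_eq_atLeast0_lessThan_card) auto
  finally show False using assms(1) by simp
qed

lemma r_less_no_3cycle: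
  assumes "2 * q < 3 * r" "length x = q" "length y = q" "length z = q"
    and "r_less r x y" "r_less r y z"
  shows "\<not> r_less r z x"
proof
  assume "r_less r z x"
  let ?A = "{i. i < q \<and> x ! i < y ! i}" and ?B = "{i. i < q \<and> y ! i < z ! i}"
    and ?C = "{i. i < q \<and> z ! i < x ! i}"
  have r: "r \<le> card ?A" "r \<le> card ?B" "r \<le> card ?C"
    using assms \<open>r_less r z x\<close> by (simp_all add: r_less_iff)
  have "card ?A + card ?B = card (?A \<union> ?B) + card (?A \<inter> ?B)"
    by (rule card_Un_Int) auto
  moreover have "card (?A \<union> ?B) \<le> q"
    by (intro subset_eq_atLeast0_lessThan_card) auto
  moreover have "card (?A \<inter> ?B) + card ?C = card ((?A \<inter> ?B) \<union> ?C)"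
    by (rule card_Un_disjoint[symmetric]) auto
  moreover have "card ((?A \<inter> ?B) \<union> ?C) \<le> q"
    by (intro subset_eq_atLeast0_lessThan_card) auto
  ultimately show False using r assms(1) by linarith
qed

lemma floorlog2_bounds:
  assumes N: "1 \<le> N"
  shows "N \<le> 2 ^ floorlog 2 N" and "floorlog 2 N * ln 2 \<le> ln (2 * real N)"
proof -
  define k where "k = floorlog 2 N"
  have "0 < k" using N floorlog_eq_zero_iff[of 2 N] by (simp add: k_def)
  moreover have "2 ^ (k - 1) \<le> N" and "N \<le> 2 ^ k"
    using floorlog_bounds[of N 2] N by (simp_all add: k_def)
  ultimately have "(2::real) ^ k \<le> 2 * N"
    by (metis Suc_diff_1 mult_le_mono2 of_nat_le_iff of_nat_mult of_nat_numeral of_nat_power power_Suc)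
  then have "ln ((2::real) ^ k) \<le> ln (2 * N)"
    using N by (subst ln_le_cancel_iff) simp_all
  then show "floorlog 2 N * ln 2 \<le> ln (2 * real N)"
    by (simp add: k_def ln_realpow)
  show "N \<le> 2 ^ floorlog 2 N"
    using \<open>N \<le> 2 ^ k\<close> by (simp add: k_def)
qed

locale increasing_seq =
  fixes seq :: "nat \<Rightarrow> nat list" and N q n :: nat
  assumes seq_in_cube: "a < N \<Longrightarrow> seq a \<in> cube q n"
    and seq_increasing: "a < b \<Longrightarrow> b < N \<Longrightarrow> r_less (q - 1) (seq a) (seq b)"
begin

lemma length_seq: "a < N \<Longrightarrow> length (seq a) = q"
  using seq_in_cube by (simp add: cube_def)

lemma seq_nth_in_range: "a < N \<Longrightarrow> i < q \<Longrightarrow> seq a ! i \<in> {1..n}"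
  using seq_in_cube[of a] by (auto simp: cube_def dest: nth_mem)

definition value_count :: "nat \<Rightarrow> nat \<Rightarrow> nat set \<Rightarrow> nat" where
  "value_count i v I = card {a\<in>I. seq a ! i = v}"

definition xlnx_counts :: "nat \<Rightarrow> nat set \<Rightarrow> real" where
  "xlnx_counts i I = (\<Sum>v\<in>{1..n}. real (value_count i v I) * ln (real (value_count i v I)))"

definition inversions :: "nat \<Rightarrow> nat set \<Rightarrow> nat set \<Rightarrow> (nat \<times> nat) set" where
  "inversions i I J = {(s, t). s \<in> I \<and> t \<in> J \<and> seq t ! i \<le> seq s ! i}"

lemma sum_value_count_if:
  assumes I: "I \<subseteq> {..<N}" and i: "i < q"
  shows "(\<Sum>v\<in>{1..n}. if P v then real (value_count i v I) else 0) = card {a\<in>I. P (seq a ! i)}"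
proof -
  have fin: "finite I" using I finite_subset by blast
  have "(\<Sum>v\<in>{1..n}. \<Sum>a\<in>{a\<in>I. seq a ! i = v}. if P (seq a ! i) then 1 else 0)
      = (\<Sum>a\<in>I. if P (seq a ! i) then 1 else (0::real))"
    by (rule sum.group) (use fin I i seq_nth_in_range in auto)
  moreover have "(\<Sum>a\<in>{a\<in>I. seq a ! i = v}. if P (seq a ! i) then 1 else 0)
      = (\<Sum>a\<in>{a\<in>I. seq a ! i = v}. if P v then 1 else (0::real))" for v
    by (rule sum.cong) auto
  ultimately show ?thesis
    using fin by (simp add: value_count_def sum.inter_filter[symmetric] if_distrib cong: if_cong)
qed

lemma sum_value_count: "I \<subseteq> {..<N} \<Longrightarrow> i < q \<Longrightarrow> (\<Sum>v\<in>{1..n}. real (value_count i v I)) = card I"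
  using sum_value_count_if[of I i "\<lambda>_. True"] by simp

lemma value_count_Un:
  assumes "I \<inter> J = {}" "finite I" "finite J"
  shows "value_count i v (I \<union> J) = value_count i v I + value_count i v J"
proof -
  have "{a\<in>I \<union> J. seq a ! i = v} = {a\<in>I. seq a ! i = v} \<union> {a\<in>J. seq a ! i = v}"
    by auto
  then show ?thesis
    unfolding value_count_def using assms by (simp add: card_Un_disjoint disjoint_iff)
qed

lemma xlnx_counts_eq_0:
  assumes "finite I" "card I \<le> 1"
  shows "xlnx_counts i I = 0"
proof -
  have "value_count i v I \<le> card I" for v
    unfolding value_count_def by (rule card_mono) (use assms in auto)
  then have "value_count i v I \<le> 1" for v
    using assms(2) le_trans by blast
  then have "real (value_count i v I) * ln (real (value_count i v I)) = 0" for v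
    using le_Suc_eq[of "value_count i v I" 0] by auto
  then show ?thesis
    unfolding xlnx_counts_def by (intro sum.neutral) blast
qed

lemma card_descents_le_1:
  assumes "s < t" "t < N"
  shows "card {i. i < q \<and> seq t ! i \<le> seq s ! i} \<le> 1"
proof -
  let ?A = "{i. i < q \<and> seq s ! i < seq t ! i}" and ?B = "{i. i < q \<and> seq t ! i \<le> seq s ! i}"
  have "q - 1 \<le> card ?A"
    using seq_increasing[OF assms] assms by (simp add: r_less_iff length_seq)
  moreover have "card ?A + card ?B = card (?A \<union> ?B)"
    by (rule card_Un_disjoint[symmetric]) auto
  moreover have "?A \<union> ?B = {..<q}"
    by auto
  ultimately show ?thesis by simp
qed

lemma sum_card_inversions_le:
  assumes I: "I \<subseteq> {..<N}" and J: "J \<subseteq> {..<N}" and before: "\<forall>s\<in>I. \<forall>t\<in>J. s < t"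
  shows "(\<Sum>i<q. card (inversions i I J)) \<le> card I * card J"
proof -
  have fin: "finite (I \<times> J)"
    using I J by (auto intro: finite_subset)
  let ?desc = "\<lambda>i p. seq (snd p) ! i \<le> seq (fst p) ! i"
  have "card (inversions i I J) = (\<Sum>p\<in>I \<times> J. if ?desc i p then 1 else 0)" for i
  proof -
    have "inversions i I J = {p\<in>I \<times> J. ?desc i p}"
      by (auto simp: inversions_def)
    then show ?thesis
      using fin by (simp add: sum.If_cases Int_def)
  qed
  then have "(\<Sum>i<q. card (inversions i I J)) = (\<Sum>i<q. \<Sum>p\<in>I \<times> J. if ?desc i p then 1 else 0)"
    by simp
  also have "\<dots> = (\<Sum>p\<in>I \<times> J. \<Sum>i<q. if ?desc i p then 1 else 0)"
    by (rule sum.swap)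
  also have "\<dots> \<le> (\<Sum>p\<in>I \<times> J. 1)"
  proof (rule sum_mono)
    fix p assume p: "p \<in> I \<times> J"
    have "(\<Sum>i<q. if ?desc i p then 1 else 0) = card {i. i < q \<and> ?desc i p}"
      by (simp add: sum.If_cases Int_def conj_commute)
    also have "\<dots> \<le> 1"
      using p before J by (intro card_descents_le_1) auto
    finally show "(\<Sum>i<q. if ?desc i p then 1 else 0) \<le> (1::nat)" .
  qed
  also have "\<dots> = card I * card J"
    by (simp add: card_cartesian_product)
  finally show ?thesis .
qed

lemma xlnx_counts_Un_le:
  fixes \<mu> e :: real
  assumes I: "I \<subseteq> {..<N}" and J: "J \<subseteq> {..<N}" and disj: "I \<inter> J = {}" and i: "i < q"
    and \<mu>: "0 < \<mu>" and e: "0 < e" "e \<le> 1"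
  shows "xlnx_counts i (I \<union> J) \<le> xlnx_counts i I + xlnx_counts i J + e * (card I + card J)
           + ln (1 / e) * (\<mu> + card (inversions i I J) / \<mu>)"
proof -
  have fin: "finite I" "finite J"
    using I J by (auto intro: finite_subset)
  obtain \<theta> where \<theta>I: "card {s\<in>I. \<theta> \<le> seq s ! i} \<le> \<mu>"
    and \<theta>J: "\<mu> * card {t\<in>J. seq t ! i < \<theta>} \<le> card (inversions i I J)"
    using exists_threshold[OF fin less_imp_le[OF \<mu>], of "\<lambda>s. seq s ! i" "\<lambda>t. seq t ! i"]
    unfolding inversions_def by blast
  define c d where "c v = real (value_count i v I)" and "d v = real (value_count i v J)" for v
  \<comment> \<open>Values below the threshold charge the merge gain to J, the others to I.\<close>
  have "xlnx_counts i (I \<union> J) - xlnx_counts i I - xlnx_counts i J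
      = (\<Sum>v\<in>{1..n}. (c v + d v) * ln (c v + d v) - c v * ln (c v) - d v * ln (d v))"
    by (simp add: xlnx_counts_def value_count_Un[OF disj fin] c_def d_def sum_subtractf)
  also have "\<dots> \<le> (\<Sum>v\<in>{1..n}. e * (c v + d v)
                    + ln (1 / e) * ((if v < \<theta> then d v else 0) + (if \<theta> \<le> v then c v else 0)))"
  proof (rule sum_mono)
    fix v
    have "0 \<le> c v" "0 \<le> d v" by (simp_all add: c_def d_def)
    then show "(c v + d v) * ln (c v + d v) - c v * ln (c v) - d v * ln (d v)
        \<le> e * (c v + d v) + ln (1 / e) * ((if v < \<theta> then d v else 0) + (if \<theta> \<le> v then c v else 0))"
      using xlnx_add_le[OF _ _ e, of "c v" "d v"] xlnx_add_le[OF _ _ e, of "d v" "c v"]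
      by (auto simp: algebra_simps)
  qed
  also have "\<dots> = e * (card I + card J)
                   + ln (1 / e) * (card {t\<in>J. seq t ! i < \<theta>} + card {s\<in>I. \<theta> \<le> seq s ! i})"
    using sum_value_count[OF I i] sum_value_count[OF J i]
      sum_value_count_if[OF J i, of "\<lambda>v. v < \<theta>"] sum_value_count_if[OF I i, of "\<lambda>v. \<theta> \<le> v"]
    unfolding c_def d_def by (simp add: sum.distrib flip: sum_distrib_left)
  also have "\<dots> \<le> e * (card I + card J) + ln (1 / e) * (\<mu> + card (inversions i I J) / \<mu>)"
  proof -
    have "card {t\<in>J. seq t ! i < \<theta>} \<le> card (inversions i I J) / \<mu>"
      using \<theta>J \<mu> by (simp add: field_simps)
    then show ?thesis
      using \<theta>I e by (intro add_left_mono mult_left_mono) simp_all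
  qed
  finally show ?thesis by simp
qed

lemma sum_xlnx_counts_Un_le:
  fixes e :: real
  assumes I: "I \<subseteq> {..<N}" and J: "J \<subseteq> {..<N}" and "I \<noteq> {}"
    and before: "\<forall>s\<in>I. \<forall>t\<in>J. s < t" and e: "0 < e" "e \<le> 1"
  shows "(\<Sum>i<q. xlnx_counts i (I \<union> J)) \<le> (\<Sum>i<q. xlnx_counts i I) + (\<Sum>i<q. xlnx_counts i J)
           + (card I + card J) * (q * e + ln (1 / e) * (q * e + 1 / e))"
proof -
  \<comment> \<open>This choice balances q \<mu> against the at most |I| |J| / \<mu> charged inversions.\<close>
  define \<mu> where "\<mu> = e * card I"
  have "finite I" using I by (auto intro: finite_subset)
  with \<open>I \<noteq> {}\<close> e have \<mu>: "0 < \<mu>" by (simp add: \<mu>_def card_gt_0_iff)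
  have "(\<Sum>i<q. real (card (inversions i I J))) \<le> card I * card J"
    using sum_card_inversions_le[OF I J before]
    unfolding of_nat_sum[symmetric] of_nat_mult[symmetric] of_nat_le_iff .
  then have "(\<Sum>i<q. card (inversions i I J)) / \<mu> \<le> card I * card J / \<mu>"
    using \<mu> by (intro divide_right_mono) simp_all
  then have "(\<Sum>i<q. card (inversions i I J) / \<mu>) \<le> card J / e"
    using \<mu> by (simp add: \<mu>_def sum_divide_distrib split: if_splits)
  moreover have "0 \<le> q * e * card J + card I / e"
    using e by simp
  ultimately have weight: "q * \<mu> + (\<Sum>i<q. card (inversions i I J) / \<mu>) \<le> (card I + card J) * (q * e + 1 / e)"
    by (simp add: \<mu>_def algebra_simps add_divide_distrib)
  have "(\<Sum>i<q. xlnx_counts i (I \<union> J)) \<le> (\<Sum>i<q. xlnx_counts i I + xlnx_counts i J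
          + e * (card I + card J) + ln (1 / e) * (\<mu> + card (inversions i I J) / \<mu>))"
    using before by (intro sum_mono xlnx_counts_Un_le I J \<mu> e) auto
  also have "\<dots> = (\<Sum>i<q. xlnx_counts i I) + (\<Sum>i<q. xlnx_counts i J) + q * e * (card I + card J)
                   + ln (1 / e) * (q * \<mu> + (\<Sum>i<q. card (inversions i I J) / \<mu>))"
    by (simp add: sum.distrib flip: sum_distrib_left)
  also have "\<dots> \<le> (\<Sum>i<q. xlnx_counts i I) + (\<Sum>i<q. xlnx_counts i J) + q * e * (card I + card J)
                   + ln (1 / e) * ((card I + card J) * (q * e + 1 / e))"
    using weight e by (intro add_left_mono mult_left_mono) simp_all
  finally show ?thesis
    by (simp add: algebra_simps)
qed

lemma sum_xlnx_counts_interval_le: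
  fixes e :: real
  assumes e: "0 < e" "e \<le> 1" and "m \<le> 2 ^ k" and "lo + m \<le> N"
  shows "(\<Sum>i<q. xlnx_counts i {lo..<lo + m}) \<le> m * k * (q * e + ln (1 / e) * (q * e + 1 / e))"
  using assms(3,4)
proof (induction k arbitrary: lo m)
  case 0
  then show ?case by (simp add: xlnx_counts_eq_0)
next
  case (Suc k)
  let ?c = "q * e + ln (1 / e) * (q * e + 1 / e)"
  have c: "0 \<le> ?c"
    using e by (intro add_nonneg_nonneg mult_nonneg_nonneg) simp_all
  show ?case
  proof (cases "m \<le> 1")
    case True
    then show ?thesis using c by (simp add: xlnx_counts_eq_0)
  next
    case False
    define h where "h = m div 2"
    let ?I = "{lo..<lo + h}" and ?J = "{lo + h..<lo + h + (m - h)}"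
    have h: "1 \<le> h" "h \<le> 2 ^ k" "m - h \<le> 2 ^ k" "h \<le> m"
      using False Suc.prems by (auto simp: h_def)
    have split: "{lo..<lo + m} = ?I \<union> ?J"
      using h by auto
    have "(\<Sum>i<q. xlnx_counts i {lo..<lo + m})
        \<le> (\<Sum>i<q. xlnx_counts i ?I) + (\<Sum>i<q. xlnx_counts i ?J) + (card ?I + card ?J) * ?c"
      unfolding split using Suc.prems h by (intro sum_xlnx_counts_Un_le e) auto
    also have "\<dots> \<le> real (h * k) * ?c + real ((m - h) * k) * ?c + m * ?c"
      using Suc.IH[of h lo] Suc.IH[of "m - h" "lo + h"] Suc.prems h by simp
    also have "\<dots> = real (h * k + (m - h) * k + m) * ?c"
      by (simp add: algebra_simps)
    also have "h * k + (m - h) * k + m = m * Suc k"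
      using h by (simp add: add_mult_distrib[symmetric])
    finally show ?thesis by (simp only: of_nat_mult)
  qed
qed

lemma sum_xlnx_counts_ge:
  assumes N: "1 \<le> N" and n: "1 \<le> n"
  shows "q * (N * ln (N / n)) \<le> (\<Sum>i<q. xlnx_counts i {..<N})"
proof -
  have "N * ln (N / n) \<le> xlnx_counts i {..<N}" if "i < q" for i
    using sum_xlnx_ge[of "{1..n}" "\<lambda>v. real (value_count i v {..<N})"]
      sum_value_count[of "{..<N}" i] that N n
    by (simp add: xlnx_counts_def)
  then have "(\<Sum>i<q. N * ln (N / n)) \<le> (\<Sum>i<q. xlnx_counts i {..<N})"
    by (intro sum_mono) simp
  then show ?thesis by simp
qed

lemma ln_ratio_le:
  fixes e :: real
  assumes N: "1 \<le> N" and n: "1 \<le> n" and e: "0 < e" "e \<le> 1" and k: "N \<le> 2 ^ k"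
  shows "q * ln (N / n) \<le> k * (q * e + ln (1 / e) * (q * e + 1 / e))"
proof -
  have "N * (q * ln (N / n)) \<le> N * (k * (q * e + ln (1 / e) * (q * e + 1 / e)))"
    using sum_xlnx_counts_ge[OF N n] sum_xlnx_counts_interval_le[OF e k, of 0]
    by (simp add: atLeast0LessThan ac_simps)
  then show ?thesis
    using N by (simp add: mult_le_cancel_left_pos)
qed

lemma ln_length_le:
  assumes N: "1 \<le> N" and n: "1 \<le> n" and q: "1 \<le> q"
  shows "ln (N / n) \<le> (1 + ln q) / (sqrt q * ln 2) * ln (2 * N)"
proof -
  \<comment> \<open>With e = 1 / sqrt q the merge cost of ln_ratio_le becomes sqrt q (1 + ln q).\<close>
  define s where "s = sqrt q"
  define k where "k = floorlog 2 N"
  have s: "1 \<le> s" using q by (simp add: s_def)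
  have q_eq: "real q = s * s" and ln_q: "ln q = 2 * ln s"
    using q by (simp_all add: s_def ln_sqrt)
  have "s * (s * ln (N / n)) \<le> k * (q * (1 / s) + ln (1 / (1 / s)) * (q * (1 / s) + 1 / (1 / s)))"
    using ln_ratio_le[OF N n, of "1 / s" k] floorlog2_bounds(1)[OF N] s by (simp add: q_eq k_def)
  also have "\<dots> = s * (k * (1 + ln q))"
    using s by (simp add: ln_q) (simp add: q_eq algebra_simps)
  finally have "s * ln (N / n) \<le> k * (1 + ln q)"
    using s by (simp add: mult_le_cancel_left_pos)
  then have "ln (N / n) \<le> k * (1 + ln q) / s"
    using s by (simp add: field_simps)
  also have "\<dots> = (1 + ln q) / (s * ln 2) * (k * ln 2)"
    by simp
  also have "\<dots> \<le> (1 + ln q) / (s * ln 2) * ln (2 * N)"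
    using floorlog2_bounds(2)[OF N] q s by (intro mult_left_mono) (simp_all add: k_def)
  finally show ?thesis by (simp add: s_def)
qed

end

lemma finite_cube: "finite (cube q n)"
  using finite_lists_length_eq[of "{1..n}" q] by (simp add: cube_def conj_commute)

lemma comparable_r_less_trans:
  assumes q: "4 \<le> q" and S: "S \<subseteq> cube q n" and comp: "r_comparable (q - 1) S"
    and in_S: "x \<in> S" "y \<in> S" "z \<in> S" and xy: "r_less (q - 1) x y" and yz: "r_less (q - 1) y z"
  shows "r_less (q - 1) x z"
proof -
  have len: "length x = q" "length y = q" "length z = q"
    using S in_S by (auto simp: cube_def)
  have "q < 2 * (q - 1)"
    using q by simp
  then have "x \<noteq> z"
    using r_less_asym[of q "q - 1" x y] len xy yz by auto
  moreover have "\<not> r_less (q - 1) z x"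
    using r_less_no_3cycle[of q "q - 1" x y z] q len xy yz by simp
  ultimately show ?thesis
    using comp in_S by (auto simp: r_comparable_def)
qed

lemma exists_increasing_enumeration:
  fixes less :: "'a \<Rightarrow> 'a \<Rightarrow> bool"
  assumes fin: "finite S" and irrefl: "\<And>x. x \<in> S \<Longrightarrow> \<not> less x x"
    and trans: "\<And>x y z. x \<in> S \<Longrightarrow> y \<in> S \<Longrightarrow> z \<in> S \<Longrightarrow> less x y \<Longrightarrow> less y z \<Longrightarrow> less x z"
    and total: "\<And>x y. x \<in> S \<Longrightarrow> y \<in> S \<Longrightarrow> x \<noteq> y \<Longrightarrow> less x y \<or> less y x"
  shows "\<exists>f. (\<forall>a < card S. f a \<in> S) \<and> (\<forall>a b. a < b \<longrightarrow> b < card S \<longrightarrow> less (f a) (f b))"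
proof -
  define rank where "rank x = card {y\<in>S. less y x}" for x
  have rank_less: "rank x < rank y" if "x \<in> S" "y \<in> S" "less x y" for x y
  proof -
    have "{z\<in>S. less z x} \<subset> {z\<in>S. less z y}"
      using trans that irrefl by blast
    then show ?thesis
      unfolding rank_def using fin by (intro psubset_card_mono) auto
  qed
  have inj: "inj_on rank S"
    by (rule inj_onI) (metis total rank_less less_irrefl)
  have "rank x < card S" if "x \<in> S" for x
  proof -
    have "rank x \<le> card (S - {x})"
      unfolding rank_def using fin irrefl that by (intro card_mono) auto
    then show ?thesis
      using fin that card_Diff1_less[of S x] by simp
  qed
  then have "rank ` S = {..<card S}"
    using inj fin by (intro card_subset_eq) (auto simp: card_image)
  then have bij: "bij_betw rank S {..<card S}"
    using inj by (simp add: bij_betw_def)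
  define f where "f = the_inv_into S rank"
  have f_in_S: "f a \<in> S" and rank_f: "rank (f a) = a" if "a < card S" for a
    using that bij bij_betw_the_inv_into[OF bij] f_the_inv_into_f_bij_betw[OF bij]
    by (auto simp: f_def bij_betw_def)
  have "less (f a) (f b)" if "a < b" "b < card S" for a b
  proof -
    have "a < card S" using that by simp
    then have "f a \<noteq> f b"
      using that rank_f by (metis less_irrefl)
    moreover have "\<not> less (f b) (f a)"
      using that \<open>a < card S\<close> f_in_S rank_f rank_less[of "f b" "f a"] by auto
    ultimately show ?thesis
      using total f_in_S that \<open>a < card S\<close> by blast
  qed
  then show ?thesis
    using f_in_S by blast
qed

lemma increasing_seq_of_comparable:
  assumes q: "4 \<le> q" and S: "S \<subseteq> cube q n" and comp: "r_comparable (q - 1) S"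
  shows "\<exists>seq. increasing_seq seq (card S) q n"
proof -
  have "finite S"
    using S finite_cube finite_subset by blast
  then have "\<exists>seq. (\<forall>a < card S. seq a \<in> S) \<and>
      (\<forall>a b. a < b \<longrightarrow> b < card S \<longrightarrow> r_less (q - 1) (seq a) (seq b))"
  proof (rule exists_increasing_enumeration)
    show "\<not> r_less (q - 1) x x" for x
      using q by (intro r_less_irrefl) simp
    show "r_less (q - 1) x z"
      if "x \<in> S" "y \<in> S" "z \<in> S" "r_less (q - 1) x y" "r_less (q - 1) y z" for x y z
      using comparable_r_less_trans[OF q S comp] that by blast
    show "r_less (q - 1) x y \<or> r_less (q - 1) y x" if "x \<in> S" "y \<in> S" "x \<noteq> y" for x y
      using comp that unfolding r_comparable_def by blast
  qed
  then obtain seq where "\<forall>a < card S. seq a \<in> S"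
    and "\<forall>a b. a < b \<longrightarrow> b < card S \<longrightarrow> r_less (q - 1) (seq a) (seq b)"
    by blast
  then have "increasing_seq seq (card S) q n"
    using S by unfold_locales auto
  then show ?thesis by blast
qed

lemma r_less_le_if_two_coords_agree:
  assumes "length u = q" "length v = q" "u ! 0 = v ! 0" "u ! 1 = v ! 1" "r_less r u v"
  shows "r \<le> q - 2"
proof -
  have "2 \<le> i" if "u ! i < v ! i" for i
  proof (rule ccontr)
    assume "\<not> 2 \<le> i"
    then have "i = 0 \<or> i = 1" by auto
    then show False using that assms by auto
  qed
  then have "{i. i < q \<and> u ! i < v ! i} \<subseteq> {2..<q}"
    by auto
  then have "card {i. i < q \<and> u ! i < v ! i} \<le> q - 2"
    using card_mono[of "{2..<q}"] by fastforce
  then show ?thesis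
    using assms by (simp add: r_less_iff)
qed

lemma card_comparable_le_square:
  assumes q: "2 \<le> q" and S: "S \<subseteq> cube q n" and comp: "r_comparable (q - 1) S"
  shows "card S \<le> n ^ 2"
proof -
  let ?head = "\<lambda>x. (x ! 0, x ! 1)"
  have not_less: "\<not> r_less (q - 1) u v"
    if "length u = q" "length v = q" "?head u = ?head v" for u v
    using r_less_le_if_two_coords_agree[of u q v "q - 1"] that q by auto
  have "inj_on ?head S"
  proof (rule inj_onI)
    fix x y assume xy: "x \<in> S" "y \<in> S" "?head x = ?head y"
    moreover have "length x = q" "length y = q"
      using S xy by (auto simp: cube_def)
    ultimately show "x = y"
      using comp not_less[of x y] not_less[of y x] unfolding r_comparable_def by metis
  qed
  moreover have "?head ` S \<subseteq> {1..n} \<times> {1..n}"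
  proof
    fix p assume "p \<in> ?head ` S"
    then obtain x where x: "x \<in> S" "p = ?head x" by blast
    have x_set: "set x \<subseteq> {1..n}" and "length x = q"
      using S x(1) by (auto simp: cube_def)
    then have "x ! 0 \<in> {1..n}" "x ! 1 \<in> {1..n}"
      using q subsetD[OF x_set nth_mem, of 0] subsetD[OF x_set nth_mem, of 1] by simp_all
    then show "p \<in> {1..n} \<times> {1..n}"
      using x(2) by simp
  qed
  ultimately have "card S \<le> card ({1..n} \<times> {1..n})"
    by (metis card_image card_mono finite_SigmaI finite_atLeastAtMost)
  then show ?thesis
    by (simp add: card_cartesian_product power2_eq_square)
qed

lemma rate_sqrt_log_le:
  fixes q :: real
  assumes q: "1 \<le> q"
  shows "(1 + ln q) / (sqrt q * ln 2) * sqrt (log 2 q) \<le> 80"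
proof -
  define w where "w = sqrt (sqrt q)"
  have w: "1 \<le> w" using q by (simp add: w_def)
  have sqrt_q: "sqrt q = w * w" and ln_q: "ln q = 4 * ln w"
    using q by (simp_all add: w_def ln_sqrt)
  have ln_w: "ln w \<le> w - 1"
    using w by (intro ln_le_minus_one) simp
  have ln_2: "1 / 2 \<le> ln (2::real)"
    using ln_le_minus_one[of "1 / 2"] by (simp add: ln_div)
  have "log 2 q \<le> 4 * w / ln 2"
    using ln_q ln_w by (simp add: log_def divide_right_mono)
  also have "\<dots> \<le> 8 * w"
    using mult_left_mono[OF ln_2, of "8 * w"] w by (simp add: field_simps)
  also have "\<dots> \<le> (8 * w) ^ 2"
    using w by (simp add: power2_eq_square)
  finally have "sqrt (log 2 q) \<le> 8 * w"
    using w real_le_lsqrt by simp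
  moreover have "(1 + ln q) / (sqrt q * ln 2) \<le> 5 * w / (w * w * ln 2)"
    unfolding sqrt_q using ln_q ln_w w ln_2 by (intro divide_right_mono) simp_all
  ultimately have "(1 + ln q) / (sqrt q * ln 2) * sqrt (log 2 q) \<le> 5 * w / (w * w * ln 2) * (8 * w)"
    using q w ln_2 by (intro mult_mono) simp_all
  also have "\<dots> = 40 / ln 2"
    using w ln_2 by (simp add: field_simps)
  also have "\<dots> \<le> 80"
    using ln_2 by (simp add: field_simps)
  finally show ?thesis .
qed

lemma le_mult_if_sub_le_mult_add:
  fixes x y k c :: real
  assumes "x - y \<le> k * (x + c)" and k: "0 \<le> k" "k \<le> 1 / 2" and c: "0 \<le> c" "c \<le> y"
  shows "x \<le> (1 + 4 * k) * y"
proof -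
  have "(1 - k) * x \<le> (1 + k) * y"
    using assms mult_left_mono[OF c(2) k(1)] by (simp add: algebra_simps)
  also have "\<dots> \<le> (1 - k) * ((1 + 4 * k) * y)"
  proof -
    have "k * (2 * k) \<le> k * 1"
      by (rule mult_left_mono) (use k in simp_all)
    then have "1 + k \<le> (1 - k) * (1 + 4 * k)"
      by (simp add: algebra_simps)
    then show ?thesis
      using c by (simp add: mult_right_mono flip: mult.assoc)
  qed
  finally show ?thesis
    using k by simp
qed

lemma (in increasing_seq) length_le_powr:
  assumes q: "4 \<le> q" and n: "2 \<le> n" and N: "1 \<le> N"
    and small: "400 / sqrt (log 2 q) \<le> 1"
  shows "N \<le> n powr (1 + 400 / sqrt (log 2 q))"
proof -
  define E where "E = 400 / sqrt (log 2 q)"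
  define \<kappa> where "\<kappa> = (1 + ln q) / (sqrt q * ln 2)"
  have "0 < sqrt (log 2 q)"
    using q by simp
  moreover have "\<kappa> * sqrt (log 2 q) \<le> 80"
    using rate_sqrt_log_le[of q] q by (simp add: \<kappa>_def)
  ultimately have \<kappa>E: "4 * \<kappa> \<le> E"
    by (simp add: E_def field_simps)
  have \<kappa>0: "0 \<le> \<kappa>"
    using q by (simp add: \<kappa>_def)
  have \<kappa>_half: "\<kappa> \<le> 1 / 2"
    using \<kappa>E small unfolding E_def by linarith
  have ln_n: "ln 2 \<le> ln n"
    using n by simp
  have "ln (N / n) \<le> \<kappa> * ln (2 * N)"
    using ln_length_le N n q by (simp add: \<kappa>_def)
  then have "ln N - ln n \<le> \<kappa> * (ln N + ln 2)"
    using N n by (simp add: ln_div ln_mult_pos add.commute)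
  then have "ln N \<le> (1 + 4 * \<kappa>) * ln n"
    using le_mult_if_sub_le_mult_add[OF _ \<kappa>0 \<kappa>_half _ ln_n] by simp
  also have "\<dots> \<le> (1 + E) * ln n"
    using \<kappa>E n by (intro mult_right_mono) simp_all
  finally have "exp (ln N) \<le> exp ((1 + E) * ln n)"
    by simp
  then show ?thesis
    using N n by (simp add: powr_def E_def)
qed

lemma card_comparable_le_powr:
  assumes q: "4 \<le> q" and n: "1 \<le> n" and S: "S \<subseteq> cube q n" and comp: "r_comparable (q - 1) S"
  shows "card S \<le> n powr (1 + 400 / sqrt (log 2 q))"
proof (cases "n = 1 \<or> 1 < 400 / sqrt (log 2 q)")
  case True
  have "card S \<le> n ^ 2"
    using q S comp by (intro card_comparable_le_square) simp_all
  then have "card S \<le> n powr 2"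
    using n by (simp add: powr_realpow flip: of_nat_power)
  also have "\<dots> \<le> n powr (1 + 400 / sqrt (log 2 q))"
    using True n by (cases "n = 1") (simp, intro powr_mono, auto)
  finally show ?thesis .
next
  case False
  show ?thesis
  proof (cases "S = {}")
    case True
    then show ?thesis by simp
  next
    case False
    moreover have "finite S"
      using S finite_cube finite_subset by blast
    moreover obtain seq where "increasing_seq seq (card S) q n"
      using increasing_seq_of_comparable[OF q S comp] by blast
    ultimately show ?thesis
      using increasing_seq.length_le_powr[of seq "card S" q n] q n \<open>\<not> (n = 1 \<or> _)\<close>
      by (simp add: Suc_le_eq card_gt_0_iff)
  qed
qed

lemma G_eq_card: "\<exists>S. S \<subseteq> cube q n \<and> r_comparable r S \<and> G q r n = card S"
proof -
  let ?G = "{card S | S. S \<subseteq> cube q n \<and> r_comparable r S}"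
  have "?G \<subseteq> {..card (cube q n)}"
    using card_mono[OF finite_cube] by auto
  then have "finite ?G"
    using finite_subset by blast
  moreover have "card {} \<in> ?G"
    by (auto simp: r_comparable_def intro!: exI[of _ "{}"])
  ultimately have "Max ?G \<in> ?G"
    by (intro Max_in) auto
  then show ?thesis
    by (auto simp: G_def r_comparable_def)
qed

lemma F_le_G:
  assumes r: "0 < r"
  shows "F q r n \<le> G q r n"
proof -
  let ?F = "{N. \<exists>x :: nat \<Rightarrow> nat list. (\<forall>a\<in>{1..N}. x a \<in> cube q n) \<and>
      (\<forall>a b. 1 \<le> a \<and> a < b \<and> b \<le> N \<longrightarrow> r_less r (x a) (x b))}"
  let ?G = "{card S | S. S \<subseteq> cube q n \<and> r_comparable r S}"
  have F_sub_G: "?F \<subseteq> ?G"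
  proof
    fix N assume "N \<in> ?F"
    then obtain x where x_cube: "\<forall>a\<in>{1..N}. x a \<in> cube q n"
      and x_incr: "\<forall>a b. 1 \<le> a \<and> a < b \<and> b \<le> N \<longrightarrow> r_less r (x a) (x b)"
      by blast
    have x_less: "r_less r (x a) (x b) \<or> r_less r (x b) (x a)"
      if "a \<in> {1..N}" "b \<in> {1..N}" "a \<noteq> b" for a b
      using x_incr that by (cases "a < b") auto
    have "inj_on x {1..N}"
    proof (rule inj_onI)
      fix a b assume "a \<in> {1..N}" "b \<in> {1..N}" "x a = x b"
      then show "a = b"
        using x_less[of a b] r_less_irrefl[OF r, of "x a"] by auto
    qed
    then have "card (x ` {1..N}) = N"
      by (simp add: card_image)
    moreover have "r_comparable r (x ` {1..N})"
      unfolding r_comparable_def by (metis (no_types, lifting) imageE x_less)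
    moreover have "x ` {1..N} \<subseteq> cube q n"
      using x_cube by blast
    ultimately show "N \<in> ?G"
      by (intro CollectI exI[of _ "x ` {1..N}"]) simp
  qed
  have "?G \<subseteq> {..card (cube q n)}"
    using card_mono[OF finite_cube] by auto
  then have "finite ?G"
    using finite_subset by blast
  moreover have "0 \<in> ?F"
    by simp
  ultimately have "Max ?F \<le> Max ?G"
    using F_sub_G by (intro Max_mono) blast+
  then show ?thesis
    by (simp add: F_def G_def r_comparable_def)
qed

theorem theorem1p2:
  shows "(\<exists>C::real. C > 0 \<and>
           (\<forall>q n::nat. q \<ge> 4 \<longrightarrow> n \<ge> 1 \<longrightarrow>
              F q (q - 1) n \<le> G q (q - 1) n \<and>
              real (G q (q - 1) n) \<le> real n powr (1 + C / sqrt (log 2 (real q)))))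
      \<and> (\<forall>\<epsilon>::real. \<epsilon> > 0 \<longrightarrow> (\<exists>q0::nat. \<forall>q n::nat. q \<ge> q0 \<longrightarrow> n \<ge> 1 \<longrightarrow>
              F q (q - 1) n \<le> G q (q - 1) n \<and>
              real (G q (q - 1) n) \<le> real n powr (1 + \<epsilon>)))"
proof -
  have bound: "F q (q - 1) n \<le> G q (q - 1) n \<and>
      real (G q (q - 1) n) \<le> real n powr (1 + 400 / sqrt (log 2 (real q)))"
    if "4 \<le> q" "1 \<le> n" for q n :: nat
  proof -
    obtain S where "S \<subseteq> cube q n" "r_comparable (q - 1) S" "G q (q - 1) n = card S"
      using G_eq_card by blast
    then show ?thesis
      using F_le_G[of "q - 1" q n] card_comparable_le_powr that by simp
  qed
  have "\<exists>q0. \<forall>q n::nat. q0 \<le> q \<longrightarrow> 1 \<le> n \<longrightarrow>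
      F q (q - 1) n \<le> G q (q - 1) n \<and> real (G q (q - 1) n) \<le> real n powr (1 + \<epsilon>)"
    if "0 < \<epsilon>" for \<epsilon> :: real
  proof -
    have "((\<lambda>q::nat. 400 / sqrt (log 2 (real q))) \<longlongrightarrow> 0) sequentially"
      by real_asymp
    then have "\<forall>\<^sub>F q in sequentially. 400 / sqrt (log 2 (real q)) < \<epsilon>"
      using that by (rule order_tendstoD(2))
    then obtain q0 where q0: "\<And>q. q0 \<le> q \<Longrightarrow> 400 / sqrt (log 2 (real q)) < \<epsilon>"
      by (auto simp: eventually_sequentially)
    have "real n powr (1 + 400 / sqrt (log 2 (real q))) \<le> real n powr (1 + \<epsilon>)"
      if "q0 \<le> q" "1 \<le> n" for q n :: nat
      using q0[OF that(1)] that(2) by (intro powr_mono) simp_all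
    then show ?thesis
      using bound by (intro exI[of _ "max q0 4"]) (fastforce intro: order_trans)
  qed
  then show ?thesis
    using bound by (intro conjI exI[of _ 400]) simp_all
qed

end
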